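(* Let $p>3$ be a prime and $q>6p^4$ a prime. Let $G=\mathbb{Z}_6^5\times\mathbb{Z}_q$, $H=\mathbb{Z}_p^4$, let $A\subset G$ be the set defined in the context, and let $B\subset H$ be a spectral set with $|B|=2p$. Then for every map $t:A\to H$, the set $$P_t=\bigcup_{a\in A}\{a\}\times (t(a)+B)\subset G\times H$$ is not a tile in $G\times H$.
   Context: A subset $X$ of a finite abelian group $E$ is a tile if there is $\Lambda\subset E$ such that every element of $E$ is uniquely written as $x+\lambda$ with $x\in X$, $\lambda\in\Lambda$. $X$ is spectral if there is a set $S$ of characters of $E$ whose restrictions to $X$ form an orthogonal basis of $L^2(X)$ (equivalently $|S|=|X|$ and $\hat 1_X(s-s')=0$ for all distinct $s,s'\in S$, where $\hat f(\gamma)=\sum_{x\in E}f(x)\gamma(x)$). Construction of $A$: let $v=(1,2,3,4,5)\in\mathbb{Z}_6^5$; for a permutation $\pi\in S_5$ let $\pi(v)$ be the vector with permuted coordinates and $A_\pi=\{x\in\mathbb{Z}_6^5:\langle \pi(v),x\rangle\equiv 0 \pmod 6\}$ (a subgroup of order $6^4$). Enumerate $S_5$ as $\pi_0,\dots,\pi_{119}$. For $0\le k\le 119$ put $A_k=A_{\pi_k}\times\{k\}$, for $120\le k\le q-1$ put $A_k=A_{\pi_0}\times\{k\}$, and $A=\bigcup_{k=0}^{q-1}A_k\subset G$. *)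

theory Defs
  imports "HOL-Analysis.Analysis" "HOL-Combinatorics.Permutations"
begin

text \<open>The finite abelian group Z_{m_0} x ... x Z_{m_{n-1}}, given by its list of moduli ms;
  elements are integer lists with 0 <= x_i < m_i, addition is componentwise modulo m_i.\<close>

definition zcar :: "nat list \<Rightarrow> int list set" where
  "zcar ms = {xs. length xs = length ms \<and> (\<forall>i<length ms. 0 \<le> xs!i \<and> xs!i < int (ms!i))}"

definition zadd :: "nat list \<Rightarrow> int list \<Rightarrow> int list \<Rightarrow> int list" where
  "zadd ms xs ys = map (\<lambda>i. (xs!i + ys!i) mod int (ms!i)) [0..<length ms]"

definition zchar :: "nat list \<Rightarrow> int list \<Rightarrow> int list \<Rightarrow> complex" where
  "zchar ms s x = cis (2 * pi * (\<Sum>i<length ms. real_of_int (s!i * x!i) / real (ms!i)))"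

definition is_tile :: "'a set \<Rightarrow> ('a \<Rightarrow> 'a \<Rightarrow> 'a) \<Rightarrow> 'a set \<Rightarrow> bool" where
  "is_tile E add X \<longleftrightarrow> X \<subseteq> E \<and>
     (\<exists>\<Lambda>. \<Lambda> \<subseteq> E \<and> (\<forall>z\<in>E. \<exists>!pr. pr \<in> X \<times> \<Lambda> \<and> z = add (fst pr) (snd pr)))"

text \<open>Spectral set: a set S of |X| characters whose restrictions to X are pairwise orthogonal
  in L^2(X) (hence an orthogonal basis of L^2(X)).\<close>

definition is_spectral :: "nat list \<Rightarrow> int list set \<Rightarrow> bool" where
  "is_spectral ms X \<longleftrightarrow> X \<subseteq> zcar ms \<and>
     (\<exists>S. S \<subseteq> zcar ms \<and> card S = card X \<and>
       (\<forall>s\<in>S. \<forall>s'\<in>S. s \<noteq> s' \<longrightarrow> (\<Sum>x\<in>X. zchar ms s x * cnj (zchar ms s' x)) = 0))"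

definition G_ms :: "nat \<Rightarrow> nat list" where "G_ms q = replicate 5 6 @ [q]"
definition H_ms :: "nat \<Rightarrow> nat list" where "H_ms p = replicate 4 p"

text \<open>A_pi = {x in Z_6^5 : <pi(v), x> = 0 mod 6}, v = (1,...,5), (pi v)_i = v_{pi i}.\<close>

definition A_pi :: "(nat \<Rightarrow> nat) \<Rightarrow> int list set" where
  "A_pi \<pi> = {x \<in> zcar (replicate 5 6). (\<Sum>i<5. int (\<pi> i + 1) * x!i) mod 6 = 0}"

text \<open>A = union over k<q of A_{pi_k} x {k} (with pi_k = pi_0 for k >= 120), e the enumeration of S_5.\<close>

definition A_set :: "(nat \<Rightarrow> nat \<Rightarrow> nat) \<Rightarrow> nat \<Rightarrow> int list set" where
  "A_set e q = {x @ [int k] | x k. k < q \<and> x \<in> A_pi (e (if k < 120 then k else 0))}"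

definition GH_add :: "nat \<Rightarrow> nat \<Rightarrow> int list \<times> int list \<Rightarrow> int list \<times> int list \<Rightarrow> int list \<times> int list" where
  "GH_add q p u w = (zadd (G_ms q) (fst u) (fst w), zadd (H_ms p) (snd u) (snd w))"

definition P_set :: "(nat \<Rightarrow> nat \<Rightarrow> nat) \<Rightarrow> nat \<Rightarrow> nat \<Rightarrow> (int list \<Rightarrow> int list) \<Rightarrow> int list set
    \<Rightarrow> (int list \<times> int list) set" where
  "P_set e q p t B = {(a, zadd (H_ms p) (t a) b) | a b. a \<in> A_set e q \<and> b \<in> B}"

end

theory Submission
  imports Defs
begin

text \<open>Every fibre \<open>{g} \<times> H\<close> of a tiling of \<open>G \<times> H\<close> by \<open>P\<^sub>t\<close> is tiled by the translates
  \<open>t(a) + B + h\<close>, one for each tile whose \<open>G\<close>-component passes through \<open>g\<close>. Hence \<open>|B| = 2p\<close>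
  divides \<open>|H| = p\<^sup>4\<close>, which is impossible for odd \<open>p\<close>.\<close>

lemma zadd_in_zcar:
  assumes "\<forall>i<length ms. ms!i > 0"
  shows "zadd ms u w \<in> zcar ms"
  using assms by (auto simp: zadd_def zcar_def)

lemma inj_on_zadd: "inj_on (zadd ms u) (zcar ms)"
proof (rule inj_onI, rule nth_equalityI)
  fix b b' assume b: "b \<in> zcar ms" and b': "b' \<in> zcar ms" and eq: "zadd ms u b = zadd ms u b'"
  then show "length b = length b'" by (simp add: zcar_def)
  fix i assume "i < length b"
  with b have i: "i < length ms" by (simp add: zcar_def)
  define m where "m = int (ms!i)"
  have "(u!i + b!i) mod m = (u!i + b'!i) mod m"
    using arg_cong[OF eq, of "\<lambda>l. l!i"] i by (simp add: zadd_def m_def)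
  then have "b!i mod m = b'!i mod m"
    by (metis add_diff_cancel_left' mod_diff_left_eq)
  moreover have "0 \<le> b!i" "b!i < m" "0 \<le> b'!i" "b'!i < m"
    using b b' i by (auto simp: zcar_def m_def)
  ultimately show "b!i = b'!i" by simp
qed

lemma zcar_Cons: "zcar (m#ms) = (\<lambda>(x,xs). x#xs) ` ({0..<int m} \<times> zcar ms)"
proof
  show "zcar (m#ms) \<subseteq> (\<lambda>(x,xs). x#xs) ` ({0..<int m} \<times> zcar ms)"
  proof
    fix l assume l: "l \<in> zcar (m#ms)"
    then obtain x xs where lx: "l = x#xs" by (cases l) (auto simp: zcar_def)
    have "x \<in> {0..<int m}" using l lx by (force simp: zcar_def)
    moreover have "xs \<in> zcar ms" using l lx unfolding zcar_def by force
    ultimately show "l \<in> (\<lambda>(x,xs). x#xs) ` ({0..<int m} \<times> zcar ms)" using lx by force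
  qed
qed (auto simp: zcar_def less_Suc_eq_0_disj)

lemma card_zcar: "card (zcar ms) = prod_list ms"
proof (induction ms)
  case Nil
  have "zcar [] = {[]}" by (auto simp: zcar_def)
  then show ?case by simp
next
  case (Cons m ms)
  have "card (zcar (m#ms)) = card ({0..<int m} \<times> zcar ms)"
    unfolding zcar_Cons by (rule card_image) (auto simp: inj_on_def)
  then show ?case using Cons by (simp add: card_cartesian_product)
qed

lemma tile_product_card_dvd:
  fixes addG :: "'a \<Rightarrow> 'a \<Rightarrow> 'a" and addH :: "'b \<Rightarrow> 'b \<Rightarrow> 'b"
  assumes tile: "is_tile (EG \<times> EH) (\<lambda>u w. (addG (fst u) (fst w), addH (snd u) (snd w)))
                   {(a, addH (t a) b) | a b. a \<in> A \<and> b \<in> B}"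
    and g: "g \<in> EG"
    and closed: "\<And>u w. addH u w \<in> EH"
    and cancel: "\<And>u. inj_on (addH u) B"
  shows "card B dvd card EH"
proof -
  define P where "P = {(a, addH (t a) b) | a b. a \<in> A \<and> b \<in> B}"
  define add where "add = (\<lambda>u w. (addG (fst u) (fst w), addH (snd u) (snd w)))"
  obtain L where uniq: "\<And>z. z \<in> EG \<times> EH \<Longrightarrow> \<exists>!pr. pr \<in> P \<times> L \<and> z = add (fst pr) (snd pr)"
  proof -
    have "is_tile (EG \<times> EH) add P"
      using tile by (simp only: P_def add_def)
    then show thesis
      unfolding is_tile_def by (elim conjE exE) (rule that, erule bspec)
  qed
  define T where "T = {(a, l). a \<in> A \<and> l \<in> L \<and> addG a (fst l) = g}"
  define cover where "cover = (\<lambda>((a, l), b). add (a, addH (t a) b) l)"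
  have cover_mem: "cover ((a, l), b) \<in> {g} \<times> EH \<and> ((a, addH (t a) b), l) \<in> P \<times> L"
    if "((a, l), b) \<in> T \<times> B" for a l b
    using that closed by (auto simp: T_def P_def cover_def add_def)
  have "bij_betw cover (T \<times> B) ({g} \<times> EH)"
  proof (rule bij_betwI')
    fix x y assume x: "x \<in> T \<times> B" and y: "y \<in> T \<times> B"
    obtain a l b a' l' b' where xy: "x = ((a, l), b)" "y = ((a', l'), b')"
      by (cases x, cases y) auto
    show "cover x = cover y \<longleftrightarrow> x = y"
    proof
      assume same: "cover x = cover y"
      let ?tiles = "\<lambda>pr. pr \<in> P \<times> L \<and> cover x = add (fst pr) (snd pr)"
      have "cover x \<in> EG \<times> EH"
        using cover_mem[of a l b] x xy g by auto
      then have "\<exists>!pr. ?tiles pr"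
        by (rule uniq)
      moreover have "?tiles ((a, addH (t a) b), l)"
        using cover_mem[of a l b] x xy by (simp add: cover_def)
      moreover have "?tiles ((a', addH (t a') b'), l')"
        using cover_mem[of a' l' b'] y xy same by (simp add: cover_def)
      ultimately have "((a, addH (t a) b), l) = ((a', addH (t a') b'), l')"
        by metis
      then have "a = a'" "l = l'" "addH (t a) b = addH (t a) b'"
        by auto
      moreover have "b = b'"
        using inj_onD[OF cancel \<open>addH (t a) b = addH (t a) b'\<close>] x y xy by simp
      ultimately show "x = y"
        using xy by simp
    qed simp
  next
    fix x assume "x \<in> T \<times> B"
    then show "cover x \<in> {g} \<times> EH"
      using cover_mem by (cases x) auto
  next
    fix z assume z: "z \<in> {g} \<times> EH"
    with g have "z \<in> EG \<times> EH" by blast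
    then obtain pr where "pr \<in> P \<times> L" "z = add (fst pr) (snd pr)"
      using ex1_implies_ex[OF uniq] by blast
    then obtain a b l where "a \<in> A" "b \<in> B" "l \<in> L" "z = add (a, addH (t a) b) l"
      by (auto simp: P_def)
    with z show "\<exists>x\<in>T \<times> B. z = cover x"
      by (intro bexI[of _ "((a, l), b)"]) (auto simp: T_def cover_def add_def)
  qed
  then have "card (T \<times> B) = card ({g} \<times> EH)"
    by (rule bij_betw_same_card)
  then have "card EH = card T * card B"
    by (simp add: card_cartesian_product)
  then show ?thesis
    by simp
qed

theorem lemma3p2:
  fixes p q :: nat and e :: "nat \<Rightarrow> nat \<Rightarrow> nat" and B :: "int list set"
    and t :: "int list \<Rightarrow> int list"
  assumes "prime p" and "p > 3" and "prime q" and "q > 6 * p ^ 4"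
    and "bij_betw e {..<120} {\<pi>. \<pi> permutes {..<5}}"
    and "is_spectral (H_ms p) B" and "card B = 2 * p"
    and "\<forall>a\<in>A_set e q. t a \<in> zcar (H_ms p)"
  shows "\<not> is_tile (zcar (G_ms q) \<times> zcar (H_ms p)) (GH_add q p) (P_set e q p t B)"
proof
  assume "is_tile (zcar (G_ms q) \<times> zcar (H_ms p)) (GH_add q p) (P_set e q p t B)"
  then have tile: "is_tile (zcar (G_ms q) \<times> zcar (H_ms p))
      (\<lambda>u w. (zadd (G_ms q) (fst u) (fst w), zadd (H_ms p) (snd u) (snd w)))
      {(a, zadd (H_ms p) (t a) b) | a b. a \<in> A_set e q \<and> b \<in> B}"
    unfolding GH_add_def[abs_def] P_set_def .
  have "card (zcar (G_ms q)) \<noteq> 0"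
    using assms(4) by (simp add: card_zcar G_ms_def)
  then obtain g where g: "g \<in> zcar (G_ms q)"
    by fastforce
  have "B \<subseteq> zcar (H_ms p)"
    using assms(6) by (simp add: is_spectral_def)
  then have "\<And>u. inj_on (zadd (H_ms p) u) B"
    using inj_on_zadd inj_on_subset by blast
  moreover have "\<And>u w. zadd (H_ms p) u w \<in> zcar (H_ms p)"
    using assms(2) by (intro zadd_in_zcar) (simp add: H_ms_def)
  ultimately have "card B dvd card (zcar (H_ms p))"
    using tile_product_card_dvd[OF tile g] by blast
  then have "2 * p dvd p ^ 4"
    by (simp add: assms(7) card_zcar H_ms_def)
  moreover have "odd p"
    using assms(1,2) prime_odd_nat by simp
  ultimately show False
    by (metis dvd_mult_left even_power)
qed

end
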